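(* Let $m, n$ be positive integers with $m \mid n$. Then $\mathcal{L}_n \subseteq \mathcal{L}_m$ and $\mathcal{M}_n \subseteq \mathcal{M}_m$. In particular, $\mathcal{L}_n \subseteq \mathcal{L}$ and $\mathcal{M}_n \subseteq \mathcal{M}$.
   Context: For an irrational real $\xi$ and positive integer $n$, $\lambda_n(\xi) = \limsup_{s/t \to \xi} \dfrac{\gcd(t,n)}{t^2 \left| \frac{s}{t} - \xi\right|}$ (limsup over rationals $s/t$, $t>0$, tending to $\xi$), and $\mathcal{L}_n = \{\lambda_n(\xi)\in\mathbb{R} : \xi\in\mathbb{R}\setminus\mathbb{Q}\}$. For reals $\xi\ne\xi'$, $\mu_n(\xi,\xi') = \sup_{(s,t)\in\mathbb{Z}^2\setminus\{0\}} \dfrac{\gcd(t,n)\,|\xi-\xi'|}{|s-t\xi|\,|s-t\xi'|}$ (with $\gcd(0,n)=n$), and $\mathcal{M}_n$ is the set of finite values of $\mu_n(\xi,\xi')$ over pairs of reals $\xi\neq\xi'$. The classical Lagrange and Markoff spectra are $\mathcal{L}=\mathcal{L}_1$ and $\mathcal{M}=\mathcal{M}_1$. *)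

theory Defs
  imports "HOL-Analysis.Analysis" "HOL-Library.Extended_Real" "HOL-Library.Liminf_Limsup"
begin

definition frac_filter :: "real \<Rightarrow> (int \<times> int) filter" where
  "frac_filter xi = inf (filtercomap (\<lambda>p. real_of_int (fst p) / real_of_int (snd p)) (at xi))
                     (principal {p. snd p > 0})"

definition lambda_n :: "nat \<Rightarrow> real \<Rightarrow> ereal" where
  "lambda_n n xi = Limsup (frac_filter xi)
     (\<lambda>(s,t). ereal (real_of_int (gcd t (int n)) /
        ((real_of_int t)\<^sup>2 * \<bar>real_of_int s / real_of_int t - xi\<bar>)))"

definition Lagrange_n :: "nat \<Rightarrow> real set" where
  "Lagrange_n n = {x. \<exists>xi. xi \<notin> \<rat> \<and> lambda_n n xi = ereal x}"

definition mu_n :: "nat \<Rightarrow> real \<Rightarrow> real \<Rightarrow> ereal" where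
  "mu_n n xi xi' = (SUP p \<in> (UNIV :: (int \<times> int) set) - {(0,0)}.
     (let s = real_of_int (fst p); t = real_of_int (snd p);
          d = \<bar>s - t * xi\<bar> * \<bar>s - t * xi'\<bar> in
      if d = 0 then \<infinity>
      else ereal (real_of_int (gcd (snd p) (int n)) * \<bar>xi - xi'\<bar> / d)))"

definition Markoff_n :: "nat \<Rightarrow> real set" where
  "Markoff_n n = {x. \<exists>xi xi'. xi \<noteq> xi' \<and> mu_n n xi xi' = ereal x}"

end

(*
  Sort the fractions s/t by the divisor d = gcd(t, n) of n. There are finitely many such
  classes, so a single class carries all of lambda_n(xi) (resp. of the supremum mu_n(xi, xi')).
  Write d = g c with g = gcd(d, m); then g divides m and m c = lcm(d, m) divides n.

  Replacing t by c t rescales the terms: the term of (s, c t) at xi is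
  gcd(c t, n) / (c gcd(t, m)) times the term of (s, t) at c xi. Because m c divides n this
  factor is at least 1, so lambda_m(c xi) <= lambda_n(xi). On the class d the denominator t
  is a multiple c t' with gcd(c t', n) = g c and g dividing gcd(t', m), so the factor is at
  most 1 there, so lambda_n(xi) <= lambda_m(c xi). Hence lambda_n(xi) = lambda_m(c xi), where
  c xi is again irrational; in the same way mu_n(xi, xi') = mu_m(c xi, c xi').
*)
theory Submission
  imports Defs
begin

lemma Limsup_finite_cover:
  fixes f :: "'a \<Rightarrow> 'b :: complete_linorder"
  assumes "finite D" "D \<noteq> {}" "eventually (\<lambda>x. \<exists>d\<in>D. x \<in> A d) F"
  shows "\<exists>d\<in>D. Limsup F f \<le> Limsup (inf F (principal (A d))) f"
proof -
  define M where "M = Max ((\<lambda>d. Limsup (inf F (principal (A d))) f) ` D)"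
  have M_in: "M \<in> (\<lambda>d. Limsup (inf F (principal (A d))) f) ` D"
    unfolding M_def using assms(1,2) by (intro Max_in) auto
  have "Limsup F f \<le> M"
    unfolding Limsup_le_iff
  proof (intro allI impI)
    fix y assume "M < y"
    have "\<forall>d\<in>D. eventually (\<lambda>x. x \<in> A d \<longrightarrow> f x < y) F"
    proof
      fix d assume "d \<in> D"
      then have "Limsup (inf F (principal (A d))) f \<le> M"
        unfolding M_def using assms(1) by (intro Max_ge) auto
      then have "eventually (\<lambda>x. f x < y) (inf F (principal (A d)))"
        using \<open>M < y\<close> by (intro Limsup_lessD) simp
      then show "eventually (\<lambda>x. x \<in> A d \<longrightarrow> f x < y) F"
        unfolding eventually_inf_principal .
    qed
    then have "eventually (\<lambda>x. \<forall>d\<in>D. x \<in> A d \<longrightarrow> f x < y) F"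
      by (rule eventually_ball_finite_distrib[OF assms(1), THEN iffD2])
    then show "eventually (\<lambda>x. y > f x) F"
      using assms(3) by eventually_elim blast
  qed
  then show ?thesis using M_in by auto
qed

lemma SUP_finite_cover:
  fixes f :: "'a \<Rightarrow> 'b :: complete_linorder"
  assumes "finite D" "D \<noteq> {}" "\<And>x. x \<in> S \<Longrightarrow> \<exists>d\<in>D. x \<in> A d"
  shows "\<exists>d\<in>D. (SUP x\<in>S. f x) \<le> (SUP x\<in>S \<inter> A d. f x)"
proof -
  define M where "M = Max ((\<lambda>d. SUP x\<in>S \<inter> A d. f x) ` D)"
  have M_in: "M \<in> (\<lambda>d. SUP x\<in>S \<inter> A d. f x) ` D"
    unfolding M_def using assms(1,2) by (intro Max_in) auto
  have "(SUP x\<in>S. f x) \<le> M"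
  proof (rule SUP_least)
    fix x assume "x \<in> S"
    then obtain d where "d \<in> D" "x \<in> A d" using assms(3) by blast
    then have "f x \<le> (SUP x\<in>S \<inter> A d. f x)" using \<open>x \<in> S\<close> by (intro SUP_upper) auto
    also have "\<dots> \<le> M" unfolding M_def using assms(1) \<open>d \<in> D\<close> by (intro Max_ge) auto
    finally show "f x \<le> M" .
  qed
  then show ?thesis using M_in by auto
qed

lemma Limsup_mono_filterlim:
  fixes f :: "'a \<Rightarrow> 'c :: complete_lattice"
  assumes "filterlim k G F" "eventually (\<lambda>x. f x \<le> g (k x)) F"
  shows "Limsup F f \<le> Limsup G g"
proof -
  have "Limsup F f \<le> Limsup F (\<lambda>x. g (k x))" using assms(2) by (rule Limsup_mono)
  also have "\<dots> \<le> Limsup (filtermap k F) g" by (rule Limsup_filtermap_ge)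
  also have "\<dots> \<le> Limsup G g"
    using assms(1) unfolding filterlim_def Limsup_def le_filter_def
    by (intro INF_superset_mono) auto
  finally show ?thesis .
qed

lemma ereal_le_if_scaled_eq:
  fixes x y :: ereal
  assumes "ereal a * x = ereal b * y" "0 < a" "a \<le> b" "0 \<le> y"
  shows "y \<le> x"
proof -
  have "ereal a * y \<le> ereal b * y"
    using assms(3,4) by (intro ereal_mult_right_mono) auto
  then have "ereal a * y \<le> ereal a * x" using assms(1) by simp
  then show ?thesis using assms(2) by (simp add: ereal_mult_le_mult_iff)
qed

lemma obtain_divisor_split:
  fixes d m n :: int
  assumes "m dvd n" "d dvd n" "0 < d" "0 < m"
  obtains g c where "d = g * c" "0 < g" "0 < c" "g dvd m" "m * c dvd n"
proof -
  define g where "g = gcd d m"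
  define c where "c = d div g"
  have "0 < g" unfolding g_def using assms(3) by simp
  have d: "d = g * c" unfolding c_def g_def by simp
  then have "0 < c" using \<open>0 < g\<close> assms(3) by (simp add: zero_less_mult_iff)
  have "g * lcm d m = d * m"
    using prod_gcd_lcm_int[of d m] assms(3,4) unfolding g_def by simp
  then have "lcm d m = c * m" using \<open>0 < g\<close> by (simp add: d mult.assoc)
  moreover have "lcm d m dvd n" using assms(2,1) by (rule lcm_least)
  ultimately have "m * c dvd n" by (simp add: mult.commute)
  moreover have "g dvd m" unfolding g_def by simp
  ultimately show thesis using that d \<open>0 < g\<close> \<open>0 < c\<close> by blast
qed

lemma mult_gcd_le_gcd_mult:
  fixes c t m n :: int
  assumes "0 < c" "m * c dvd n" "n \<noteq> 0"
  shows "c * gcd t m \<le> gcd (c * t) n"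
proof -
  have "c * gcd t m = gcd (c * t) (c * m)"
    using gcd_mult_distrib_int[of c t m] assms(1) by simp
  also have "\<dots> dvd gcd (c * t) n"
    using assms(2) by (intro gcd_greatest gcd_dvd1 dvd_trans[OF gcd_dvd2]) (simp add: mult.commute)
  then have "gcd (c * t) (c * m) \<le> gcd (c * t) n"
    using assms(3) by (intro zdvd_imp_le) auto
  finally show ?thesis .
qed

lemma gcd_mult_le_mult_gcd:
  fixes c g t m n :: int
  assumes "gcd (c * t) n = c * g" "g dvd t" "g dvd m" "m \<noteq> 0" "0 \<le> c"
  shows "gcd (c * t) n \<le> c * gcd t m"
proof -
  have "g \<le> gcd t m" using assms(2-4) by (intro zdvd_imp_le) auto
  then show ?thesis using assms(1,5) by (simp add: mult_left_mono)
qed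

definition pair_ratio :: "int \<times> int \<Rightarrow> real" where
  "pair_ratio p = real_of_int (fst p) / real_of_int (snd p)"

lemma frac_filter_pair_ratio:
  "frac_filter xi = inf (filtercomap pair_ratio (at xi)) (principal {p. 0 < snd p})"
  unfolding frac_filter_def pair_ratio_def ..

lemma eventually_frac_filter_pos: "eventually (\<lambda>p. 0 < snd p) (frac_filter xi)"
  unfolding frac_filter_def eventually_inf_principal by simp

lemma filterlim_pair_ratio_frac_filter: "filterlim pair_ratio (at xi) (frac_filter xi)"
  unfolding frac_filter_pair_ratio by (rule filterlim_mono[OF filterlim_filtercomap]) auto

lemma filterlim_frac_filterI:
  assumes "eventually (\<lambda>x. 0 < snd (k x)) F" "filterlim (\<lambda>x. pair_ratio (k x)) (at xi) F"
  shows "filterlim k (frac_filter xi) F"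
  unfolding frac_filter_pair_ratio filterlim_inf filterlim_principal filterlim_filtercomap_iff
  using assms by (simp add: o_def)

lemma filterlim_mult_at:
  fixes a y :: "'a :: real_normed_field"
  assumes "a \<noteq> 0"
  shows "filterlim (\<lambda>x. a * x) (at (a * y)) (at y)"
  unfolding filterlim_at
proof
  show "eventually (\<lambda>x. a * x \<in> UNIV \<and> a * x \<noteq> a * y) (at y)"
    using assms by (auto simp: eventually_at_filter)
  show "((\<lambda>x. a * x) \<longlongrightarrow> a * y) (at y)"
    by (intro tendsto_intros)
qed

lemma filterlim_frac_filter_rescale:
  assumes "a \<noteq> 0" "F \<le> frac_filter xi"
    and "eventually (\<lambda>p. 0 < snd (k p) \<and> pair_ratio (k p) = a * pair_ratio p) F"
  shows "filterlim k (frac_filter (a * xi)) F"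
proof (rule filterlim_frac_filterI)
  show "eventually (\<lambda>p. 0 < snd (k p)) F"
    using assms(3) by eventually_elim simp
  have "filterlim (\<lambda>p. a * pair_ratio p) (at (a * xi)) F"
    by (rule filterlim_mono[OF filterlim_compose[OF filterlim_mult_at[OF assms(1)]
          filterlim_pair_ratio_frac_filter] order_refl assms(2)])
  then show "filterlim (\<lambda>p. pair_ratio (k p)) (at (a * xi)) F"
    by (rule filterlim_mono_eventually[OF _ order_refl order_refl])
      (use assms(3) in \<open>auto elim: eventually_mono\<close>)
qed

lemma finite_pos_divisors: "n \<noteq> 0 \<Longrightarrow> finite {d :: int. 0 < d \<and> d dvd n}"
  by (rule finite_subset[OF _ finite_divisors_int]) auto

lemma obtain_gcd_eq_mult_factor:
  fixes t n c g :: int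
  assumes "gcd t n = c * g"
  obtains t' where "t = c * t'" "g dvd t'"
proof -
  have "c * g dvd t" using assms by (metis gcd_dvd1)
  then obtain u where "t = c * g * u" by (rule dvdE)
  then show thesis using that[of "g * u"] by (simp add: mult.assoc)
qed

definition lagrange_term :: "nat \<Rightarrow> real \<Rightarrow> int \<times> int \<Rightarrow> real" where
  "lagrange_term n xi p =
     real_of_int (gcd (snd p) (int n)) / ((real_of_int (snd p))\<^sup>2 * \<bar>pair_ratio p - xi\<bar>)"

lemma lambda_n_eq_Limsup_lagrange_term:
  "lambda_n n xi = Limsup (frac_filter xi) (\<lambda>p. ereal (lagrange_term n xi p))"
  unfolding lambda_n_def lagrange_term_def pair_ratio_def by (simp add: case_prod_beta')

lemma lagrange_term_nonneg: "0 \<le> lagrange_term n xi p"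
  unfolding lagrange_term_def by simp

lemma lagrange_term_rescale:
  fixes c s t :: int
  assumes "0 < c"
  shows "ereal (of_int (c * gcd t (int m))) * ereal (lagrange_term n xi (s, c * t))
       = ereal (of_int (gcd (c * t) (int n))) * ereal (lagrange_term m (of_int c * xi) (s, t))"
proof -
  have denom: "(of_int (c * t))\<^sup>2 * \<bar>of_int s / of_int (c * t) - xi\<bar>
      = of_int c * ((of_int t)\<^sup>2 * \<bar>of_int s / of_int t - of_int c * xi\<bar> :: real)"
  proof (cases "t = 0")
    case False
    have "of_int s / of_int (c * t) - xi = (of_int s / of_int t - of_int c * xi) / (of_int c :: real)"
      using assms False by (simp add: field_simps)
    then show ?thesis
      using assms by (simp add: power_mult_distrib power2_eq_square)
  qed simp
  show ?thesis
    unfolding lagrange_term_def pair_ratio_def fst_conv snd_conv denom times_ereal.simps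
    using assms by simp
qed

lemma lambda_n_rescaled_le:
  assumes "0 < m" "0 < n" "0 < c" "int m * c dvd int n"
  shows "lambda_n m (of_int c * xi) \<le> lambda_n n xi"
proof -
  define h where "h p = (fst p, c * snd p)" for p :: "int \<times> int"
  have "filterlim h (frac_filter (1 / of_int c * (of_int c * xi))) (frac_filter (of_int c * xi))"
  proof (rule filterlim_frac_filter_rescale)
    show "eventually (\<lambda>p. 0 < snd (h p) \<and> pair_ratio (h p) = 1 / of_int c * pair_ratio p)
        (frac_filter (of_int c * xi))"
      using eventually_frac_filter_pos
      by eventually_elim (use assms(3) in \<open>auto simp: h_def pair_ratio_def\<close>)
  qed (use assms(3) in auto)
  then have "filterlim h (frac_filter xi) (frac_filter (of_int c * xi))"
    using assms(3) by simp
  moreover have "ereal (lagrange_term m (of_int c * xi) (s, t)) \<le> ereal (lagrange_term n xi (h (s, t)))"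
    for s t
    unfolding h_def fst_conv snd_conv
    using assms lagrange_term_nonneg mult_gcd_le_gcd_mult[of c "int m" "int n" t]
    by (intro ereal_le_if_scaled_eq[OF lagrange_term_rescale]) (auto simp del: of_int_mult)
  ultimately show ?thesis
    unfolding lambda_n_eq_Limsup_lagrange_term
    by (intro Limsup_mono_filterlim always_eventually) auto
qed

lemma Limsup_gcd_class_le_lambda_n:
  assumes "0 < m" "0 < g" "0 < c" "g dvd int m"
  shows "Limsup (inf (frac_filter xi) (principal {p. gcd (snd p) (int n) = g * c}))
      (\<lambda>p. ereal (lagrange_term n xi p)) \<le> lambda_n m (of_int c * xi)"
proof -
  define G where "G = inf (frac_filter xi) (principal {p. gcd (snd p) (int n) = g * c})"
  define k where "k p = (fst p, snd p div c)" for p :: "int \<times> int"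
  have "eventually (\<lambda>p. 0 < snd p \<and> gcd (snd p) (int n) = c * g) G"
    using eventually_frac_filter_pos[of xi] unfolding G_def eventually_inf_principal
    by (auto elim: eventually_mono)
  then have factored: "eventually (\<lambda>p. \<exists>s t. p = (s, c * t) \<and> 0 < t \<and> g dvd t
      \<and> gcd (c * t) (int n) = c * g) G"
  proof eventually_elim
    case (elim p)
    then obtain t where t: "snd p = c * t" "g dvd t"
      using obtain_gcd_eq_mult_factor[of "snd p" "int n" c g] by blast
    moreover have "0 < t" using elim assms(3) unfolding t(1) by (simp add: zero_less_mult_iff)
    ultimately show ?case
      using elim by (intro exI[of _ "fst p"] exI[of _ t]) (auto simp: prod_eq_iff)
  qed
  have "filterlim k (frac_filter (of_int c * xi)) G"
  proof (rule filterlim_frac_filter_rescale)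
    show "G \<le> frac_filter xi" unfolding G_def by simp
    show "eventually (\<lambda>p. 0 < snd (k p) \<and> pair_ratio (k p) = of_int c * pair_ratio p) G"
      using factored by eventually_elim (use assms(3) in \<open>auto simp: k_def pair_ratio_def\<close>)
  qed (use assms(3) in simp)
  moreover have "eventually (\<lambda>p. ereal (lagrange_term n xi p)
      \<le> ereal (lagrange_term m (of_int c * xi) (k p))) G"
    using factored
  proof eventually_elim
    case (elim p)
    then obtain s t where p: "p = (s, c * t)" "0 < t" "g dvd t" "gcd (c * t) (int n) = c * g"
      by blast
    have kp: "k p = (s, t)" using p(1) assms(3) by (simp add: k_def)
    have "gcd (c * t) (int n) \<le> c * gcd t (int m)"
      by (rule gcd_mult_le_mult_gcd) (use p assms in auto)
    then show ?case
      unfolding kp unfolding p(1) using p(4) assms lagrange_term_nonneg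
      by (intro ereal_le_if_scaled_eq[OF lagrange_term_rescale[symmetric]]) (auto simp del: of_int_mult)
  qed
  ultimately show ?thesis
    unfolding G_def[symmetric] lambda_n_eq_Limsup_lagrange_term
    by (rule Limsup_mono_filterlim)
qed

lemma obtain_lambda_n_eq_rescaled:
  assumes "0 < m" "0 < n" "m dvd n"
  obtains c :: int where "0 < c" "lambda_n n xi = lambda_n m (of_int c * xi)"
proof -
  define D where "D = {d :: int. 0 < d \<and> d dvd int n}"
  have D: "finite D" "\<And>t. gcd t (int n) \<in> D"
    using finite_pos_divisors[of "int n"] assms(2) by (auto simp: D_def)
  then have "D \<noteq> {}" by blast
  have cover: "eventually (\<lambda>p. \<exists>d\<in>D. p \<in> {q. gcd (snd q) (int n) = d}) (frac_filter xi)"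
    using D(2) by (intro always_eventually) auto
  obtain d where "d \<in> D" and split: "lambda_n n xi \<le> Limsup
      (inf (frac_filter xi) (principal {p. gcd (snd p) (int n) = d})) (\<lambda>p. ereal (lagrange_term n xi p))"
    using Limsup_finite_cover[OF D(1) \<open>D \<noteq> {}\<close> cover, of "\<lambda>p. ereal (lagrange_term n xi p)"]
    unfolding lambda_n_eq_Limsup_lagrange_term ..
  obtain g c where gc: "d = g * c" "0 < g" "0 < c" "g dvd int m" "int m * c dvd int n"
    using obtain_divisor_split[of "int m" "int n" d] \<open>d \<in> D\<close> assms unfolding D_def by auto
  have "lambda_n n xi \<le> lambda_n m (of_int c * xi)"
    using split Limsup_gcd_class_le_lambda_n[OF assms(1) gc(2-4)] unfolding gc(1) by (rule order_trans)
  moreover have "lambda_n m (of_int c * xi) \<le> lambda_n n xi"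
    by (rule lambda_n_rescaled_le[OF assms(1,2) gc(3,5)])
  ultimately show thesis using gc(3) that by (metis antisym)
qed

definition markoff_term :: "nat \<Rightarrow> real \<Rightarrow> real \<Rightarrow> int \<times> int \<Rightarrow> ereal" where
  "markoff_term n xi xi' p =
     (let s = real_of_int (fst p); t = real_of_int (snd p);
          d = \<bar>s - t * xi\<bar> * \<bar>s - t * xi'\<bar> in
      if d = 0 then \<infinity>
      else ereal (real_of_int (gcd (snd p) (int n)) * \<bar>xi - xi'\<bar> / d))"

lemma mu_n_eq_SUP_markoff_term:
  "mu_n n xi xi' = (SUP p \<in> UNIV - {(0, 0)}. markoff_term n xi xi' p)"
  unfolding mu_n_def markoff_term_def ..

lemma markoff_term_nonneg: "0 \<le> markoff_term n xi xi' p"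
  unfolding markoff_term_def Let_def by simp

lemma markoff_term_rescale:
  fixes c s t :: int
  assumes "0 < c" "0 < m" "0 < n"
  shows "ereal (of_int (c * gcd t (int m))) * markoff_term n xi xi' (s, c * t)
       = ereal (of_int (gcd (c * t) (int n))) * markoff_term m (of_int c * xi) (of_int c * xi') (s, t)"
proof -
  define d where "d = \<bar>of_int s - of_int (c * t) * xi\<bar> * \<bar>of_int s - of_int (c * t) * xi'\<bar>"
  have d: "\<bar>of_int s - of_int t * (of_int c * xi)\<bar> * \<bar>of_int s - of_int t * (of_int c * xi')\<bar> = d"
    unfolding d_def by (simp add: mult_ac)
  have diff: "\<bar>of_int c * xi - of_int c * xi'\<bar> = of_int c * \<bar>xi - xi'\<bar>"
    using assms(1) by (simp add: abs_mult flip: right_diff_distrib)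
  have pos: "0 < gcd t (int m)" "0 < gcd (c * t) (int n)" using assms by auto
  show ?thesis
  proof (cases "d = 0")
    case True
    then show ?thesis
      unfolding markoff_term_def Let_def fst_conv snd_conv d d_def[symmetric]
      using assms(1) pos by simp
  next
    case False
    then show ?thesis
      unfolding markoff_term_def Let_def fst_conv snd_conv d d_def[symmetric] diff
      by simp
  qed
qed

lemma mu_n_rescaled_le:
  assumes "0 < m" "0 < n" "0 < c" "int m * c dvd int n"
  shows "mu_n m (of_int c * xi) (of_int c * xi') \<le> mu_n n xi xi'"
  unfolding mu_n_eq_SUP_markoff_term
proof (rule SUP_least)
  fix p :: "int \<times> int"
  assume "p \<in> UNIV - {(0, 0)}"
  then obtain s t where p: "p = (s, t)" "(s, c * t) \<in> UNIV - {(0, 0)}"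
    using assms(3) by (cases p) auto
  have "markoff_term m (of_int c * xi) (of_int c * xi') p \<le> markoff_term n xi xi' (s, c * t)"
    unfolding p(1) using assms markoff_term_nonneg mult_gcd_le_gcd_mult[of c "int m" "int n" t]
    by (intro ereal_le_if_scaled_eq[OF markoff_term_rescale]) (auto simp del: of_int_mult)
  also have "\<dots> \<le> (SUP p \<in> UNIV - {(0, 0)}. markoff_term n xi xi' p)"
    using p(2) by (rule SUP_upper)
  finally show "markoff_term m (of_int c * xi) (of_int c * xi') p
      \<le> (SUP p \<in> UNIV - {(0, 0)}. markoff_term n xi xi' p)" .
qed

lemma SUP_gcd_class_le_mu_n:
  assumes "0 < m" "0 < n" "0 < g" "0 < c" "g dvd int m"
  shows "(SUP p \<in> (UNIV - {(0, 0)}) \<inter> {p. gcd (snd p) (int n) = g * c}. markoff_term n xi xi' p)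
      \<le> mu_n m (of_int c * xi) (of_int c * xi')"
  unfolding mu_n_eq_SUP_markoff_term
proof (rule SUP_least)
  fix p :: "int \<times> int"
  assume p: "p \<in> (UNIV - {(0, 0)}) \<inter> {p. gcd (snd p) (int n) = g * c}"
  obtain s t0 where p_eq: "p = (s, t0)" by (cases p)
  then have "gcd t0 (int n) = c * g" using p by (simp add: mult.commute)
  then obtain t where t: "t0 = c * t" "g dvd t" by (rule obtain_gcd_eq_mult_factor)
  have gcd: "gcd (c * t) (int n) = c * g"
    using \<open>gcd t0 (int n) = c * g\<close> unfolding t(1) .
  have nz: "(s, t) \<in> UNIV - {(0, 0)}" using p unfolding p_eq t(1) by auto
  have "gcd (c * t) (int n) \<le> c * gcd t (int m)"
    by (rule gcd_mult_le_mult_gcd) (use gcd t assms in auto)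
  then have "markoff_term n xi xi' p \<le> markoff_term m (of_int c * xi) (of_int c * xi') (s, t)"
    unfolding p_eq t(1) using gcd assms markoff_term_nonneg
    by (intro ereal_le_if_scaled_eq[OF markoff_term_rescale[symmetric]]) (auto simp del: of_int_mult)
  also have "\<dots> \<le> (SUP p \<in> UNIV - {(0, 0)}. markoff_term m (of_int c * xi) (of_int c * xi') p)"
    using nz by (rule SUP_upper)
  finally show "markoff_term n xi xi' p
      \<le> (SUP p \<in> UNIV - {(0, 0)}. markoff_term m (of_int c * xi) (of_int c * xi') p)" .
qed

lemma obtain_mu_n_eq_rescaled:
  assumes "0 < m" "0 < n" "m dvd n"
  obtains c :: int where "0 < c" "mu_n n xi xi' = mu_n m (of_int c * xi) (of_int c * xi')"
proof -
  define D where "D = {d :: int. 0 < d \<and> d dvd int n}"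
  have D: "finite D" "\<And>t. gcd t (int n) \<in> D"
    using finite_pos_divisors[of "int n"] assms(2) by (auto simp: D_def)
  then have "D \<noteq> {}" by blast
  have "\<exists>d\<in>D. (SUP p \<in> UNIV - {(0, 0)}. markoff_term n xi xi' p)
      \<le> (SUP p \<in> (UNIV - {(0, 0)}) \<inter> {p. gcd (snd p) (int n) = d}. markoff_term n xi xi' p)"
    by (rule SUP_finite_cover[OF D(1) \<open>D \<noteq> {}\<close>]) (use D(2) in auto)
  then obtain d where "d \<in> D" and split: "mu_n n xi xi' \<le> (SUP p \<in> (UNIV - {(0, 0)})
      \<inter> {p. gcd (snd p) (int n) = d}. markoff_term n xi xi' p)"
    unfolding mu_n_eq_SUP_markoff_term ..
  obtain g c where gc: "d = g * c" "0 < g" "0 < c" "g dvd int m" "int m * c dvd int n"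
    using obtain_divisor_split[of "int m" "int n" d] \<open>d \<in> D\<close> assms unfolding D_def by auto
  have "mu_n n xi xi' \<le> mu_n m (of_int c * xi) (of_int c * xi')"
    using split SUP_gcd_class_le_mu_n[OF assms(1,2) gc(2-4)] unfolding gc(1) by (rule order_trans)
  moreover have "mu_n m (of_int c * xi) (of_int c * xi') \<le> mu_n n xi xi'"
    by (rule mu_n_rescaled_le[OF assms(1,2) gc(3,5)])
  ultimately show thesis using gc(3) that by (metis antisym)
qed

lemma Lagrange_n_subset:
  assumes "0 < m" "0 < n" "m dvd n"
  shows "Lagrange_n n \<subseteq> Lagrange_n m"
proof
  fix x assume "x \<in> Lagrange_n n"
  then obtain xi where xi: "xi \<notin> \<rat>" "lambda_n n xi = ereal x"
    unfolding Lagrange_n_def by auto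
  obtain c :: int where c: "0 < c" "lambda_n n xi = lambda_n m (of_int c * xi)"
    using obtain_lambda_n_eq_rescaled[OF assms] .
  have "of_int c * xi \<notin> \<rat>"
  proof
    assume "of_int c * xi \<in> \<rat>"
    then have "(of_int c * xi) / of_int c \<in> \<rat>" by (intro Rats_divide) auto
    then show False using xi(1) c(1) by simp
  qed
  then show "x \<in> Lagrange_n m" using xi(2) c(2) unfolding Lagrange_n_def by auto
qed

lemma Markoff_n_subset:
  assumes "0 < m" "0 < n" "m dvd n"
  shows "Markoff_n n \<subseteq> Markoff_n m"
proof
  fix x assume "x \<in> Markoff_n n"
  then obtain xi xi' where xi: "xi \<noteq> xi'" "mu_n n xi xi' = ereal x"
    unfolding Markoff_n_def by auto
  obtain c :: int where c: "0 < c" "mu_n n xi xi' = mu_n m (of_int c * xi) (of_int c * xi')"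
    using obtain_mu_n_eq_rescaled[OF assms] .
  have "of_int c * xi \<noteq> of_int c * xi'" using xi(1) c(1) by simp
  moreover have "mu_n m (of_int c * xi) (of_int c * xi') = ereal x" using xi(2) c(2) by simp
  ultimately show "x \<in> Markoff_n m" unfolding Markoff_n_def by (intro CollectI exI conjI)
qed

theorem corollary3p2:
  fixes m n :: nat
  assumes "0 < m" and "0 < n" and "m dvd n"
  shows "Lagrange_n n \<subseteq> Lagrange_n m \<and> Markoff_n n \<subseteq> Markoff_n m
         \<and> Lagrange_n n \<subseteq> Lagrange_n 1 \<and> Markoff_n n \<subseteq> Markoff_n 1"
  using Lagrange_n_subset[OF assms] Markoff_n_subset[OF assms]
    Lagrange_n_subset[of 1 n] Markoff_n_subset[of 1 n] assms(2) by auto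

end
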